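(* Every finite word that occurs as a factor of $\mathbf{t}_{3/2}$ occurs in $\mathbf{t}_{3/2}$ both at some even position and at some odd position.
   Context: The Thue--Morse word in base $3/2$ is the unique binary sequence $\mathbf{t}_{3/2}=(t_n)_{n\ge0}$ with $t_0=0$, $t_{3n}=t_{3n+1}=t_{2n}$ and $t_{3n+2}=1-t_{2n+1}$ for all $n\ge0$ (equivalently, $t_n$ is the digit sum modulo $2$ of the base-$3/2$ expansion of $n$, where $\langle 0\rangle$ is empty and $\langle n\rangle=\langle m\rangle d$ for $2n=3m+d$, $d\in\{0,1,2\}$). A word $u$ occurs at position $i$ if $t_it_{i+1}\cdots t_{i+|u|-1}=u$. *)

theory Defs
  imports Main
begin

text \<open>Thue--Morse word in base 3/2: t 0 = 0, t (3n) = t (3n+1) = t (2n),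
  t (3n+2) = 1 - t (2n+1).  Values in {0,1} as naturals.\<close>

function tm32 :: "nat \<Rightarrow> nat" where
  "tm32 n = (if n = 0 then 0
             else if n mod 3 = 2 then 1 - tm32 (2 * (n div 3) + 1)
             else tm32 (2 * (n div 3)))"
  by auto
termination
  by (relation "measure id") (auto, presburger+)

declare tm32.simps [simp del]

definition occurs_at :: "nat list \<Rightarrow> nat \<Rightarrow> bool" where
  "occurs_at u i \<longleftrightarrow> (\<forall>j < length u. tm32 (i + j) = u ! j)"

end

theory Submission
  imports Defs
begin

(* Put m = 2n div 3: the base-3/2 expansion of n is that of m followed by the digit 2n - 3m,
   which has the parity of m, so t n = t m + m (mod 2).  Replacing n by n + 3^K j replaces m by
   m + 3^(K-1) (2j), of the same parity; iterating K times drives n \<le> K down to 0 and gives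
   t (n + 3^K j) = t n + t (2^K j) (mod 2).  Hence a factor occurring at p reappears, possibly
   complemented, at the odd distance 3^K for any large K; and if both available shifts complement
   it, applying one after the other restores it at an odd distance. *)

lemma tm32_0 [simp]: "tm32 0 = 0"
  by (simp add: tm32.simps)

lemma tm32_le_1: "tm32 n \<le> 1"
proof (induction n rule: less_induct)
  case (less n)
  show ?case
  proof (cases "n = 0")
    case False
    then have "2 * (n div 3) < n" by arith
    then show ?thesis using less.IH by (subst tm32.simps) auto
  qed simp
qed

lemma tm32_mod_2 [simp]: "tm32 n mod 2 = tm32 n"
  using tm32_le_1[of n] by (intro mod_less) linarith

lemma tm32_rec: "tm32 n = (tm32 (2 * n div 3) + 2 * n div 3) mod 2"
proof -
  consider "n mod 3 = 0" | "n mod 3 = 1" | "n mod 3 = 2" by arith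
  then show ?thesis
  proof cases
    case 1
    then have "2 * n div 3 = 2 * (n div 3)" by presburger
    then show ?thesis using 1 by (subst tm32.simps) simp
  next
    case 2
    then have "2 * n div 3 = 2 * (n div 3)" by presburger
    then show ?thesis using 2 by (subst tm32.simps) simp
  next
    case 3
    then have "2 * n div 3 = 2 * (n div 3) + 1" by presburger
    then show ?thesis using 3 tm32_le_1[of "2 * (n div 3) + 1"]
      by (subst tm32.simps) (auto simp: le_Suc_eq)
  qed
qed

lemma tm32_add_pow3:
  assumes "n \<le> K"
  shows "tm32 (n + 3 ^ K * j) = (tm32 n + tm32 (2 ^ K * j)) mod 2"
  using assms
proof (induction K arbitrary: n j)
  case 0
  then show ?case by simp
next
  case (Suc K)
  define m where "m = 2 * n div 3"
  have "m \<le> K" using Suc.prems unfolding m_def by arith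
  have "2 * (n + 3 ^ Suc K * j) div 3 = m + 3 ^ K * (2 * j)" unfolding m_def by simp
  then have "tm32 (n + 3 ^ Suc K * j) = (tm32 (m + 3 ^ K * (2 * j)) + (m + 3 ^ K * (2 * j))) mod 2"
    by (subst tm32_rec) simp
  also have "\<dots> = (tm32 m + tm32 (2 ^ Suc K * j) + m) mod 2"
    using Suc.IH[OF \<open>m \<le> K\<close>, of "2 * j"]
    by (simp add: mod_add_left_eq mult.left_commute mult.assoc add.assoc[symmetric])
  also have "\<dots> = (tm32 n + tm32 (2 ^ Suc K * j)) mod 2"
    using tm32_rec[of n] unfolding m_def[symmetric] by presburger
  finally show ?case .
qed

lemma occurs_at_add_pow3:
  assumes "occurs_at u p" and "p + length u \<le> K"
  shows "occurs_at (map (\<lambda>x. (x + tm32 (2 ^ K * j)) mod 2) u) (p + 3 ^ K * j)"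
  unfolding occurs_at_def
proof (intro allI impI)
  fix i
  assume "i < length (map (\<lambda>x. (x + tm32 (2 ^ K * j)) mod 2) u)"
  then have i: "i < length u" by simp
  have "tm32 (p + 3 ^ K * j + i) = (tm32 (p + i) + tm32 (2 ^ K * j)) mod 2"
    using tm32_add_pow3[of "p + i" K j] i assms(2) by (simp add: ac_simps)
  then show "tm32 (p + 3 ^ K * j + i) = map (\<lambda>x. (x + tm32 (2 ^ K * j)) mod 2) u ! i"
    using assms(1) i by (simp add: occurs_at_def)
qed

lemma occurs_at_mod_2: "occurs_at u p \<Longrightarrow> map (\<lambda>x. x mod 2) u = u"
  by (metis (no_types, lifting) occurs_at_def in_set_conv_nth map_idI tm32_mod_2)

lemma occurs_at_odd_shift:
  assumes u: "occurs_at u p"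
  shows "\<exists>d. odd d \<and> occurs_at u (p + d)"
proof -
  define K where "K = p + length u"
  define K' where "K' = p + 3 ^ K + length u"
  have "((x + 1) mod 2 + 1) mod 2 = x mod 2" for x :: nat
    by presburger
  then have flip_flip: "map (\<lambda>x. (x + 1) mod 2) (map (\<lambda>x. (x + 1) mod 2) u) = u"
    unfolding map_map o_def using occurs_at_mod_2[OF u] by presburger
  consider "tm32 (2 ^ K) = 0" | "tm32 (2 ^ Suc K') = 0"
    | "tm32 (2 ^ K) = 1" "tm32 (2 ^ Suc K') = 1"
    using tm32_le_1[of "2 ^ K"] tm32_le_1[of "2 ^ Suc K'"] by linarith
  then show ?thesis
  proof cases
    case 1
    then have "occurs_at u (p + 3 ^ K)"
      using occurs_at_add_pow3[OF u, of K 1] occurs_at_mod_2[OF u] by (simp add: K_def)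
    then show ?thesis by (intro exI[of _ "3 ^ K"]) simp
  next
    case 2
    then have "occurs_at u (p + 3 ^ Suc K')"
      using occurs_at_add_pow3[OF u, of "Suc K'" 1] occurs_at_mod_2[OF u] by (simp add: K'_def)
    then show ?thesis by (intro exI[of _ "3 ^ Suc K'"]) simp
  next
    case 3
    define v where "v = map (\<lambda>x. (x + 1) mod 2) u"
    have v: "occurs_at v (p + 3 ^ K)"
      using occurs_at_add_pow3[OF u, of K 1] 3 by (simp add: K_def v_def)
    have "p + 3 ^ K + length v \<le> K'" by (simp add: K'_def v_def)
    moreover have "tm32 (2 ^ K' * 2) = 1" using 3 by (simp add: mult.commute)
    ultimately have "occurs_at u (p + 3 ^ K + 3 ^ K' * 2)"
      using occurs_at_add_pow3[OF v, of K' 2] by (simp only: v_def flip_flip)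
    then show ?thesis by (intro exI[of _ "3 ^ K + 3 ^ K' * 2"]) (simp add: add.assoc)
  qed
qed

theorem proposition14:
  fixes u :: "nat list"
  assumes "\<exists>i. occurs_at u i"
  shows "(\<exists>i. even i \<and> occurs_at u i) \<and> (\<exists>i. odd i \<and> occurs_at u i)"
proof -
  obtain p where p: "occurs_at u p" using assms ..
  obtain d where "odd d" and pd: "occurs_at u (p + d)" using occurs_at_odd_shift[OF p] by blast
  then have "even (p + d) \<longleftrightarrow> odd p" by simp
  then show ?thesis using p pd by (cases "even p") blast+
qed

end
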